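(* Let $n=2k+1$ with $k\ge 1$. If $S$ is a strong resolving set of $S_n$, then $|S|\ge n$.
   Context: For $n\ge 3$, $S_n$ is the graph with vertex set $\{a_i,b_i,c_i,d_i : 1\le i\le n\}$ and edge set $\{a_ia_{i+1}, b_ib_{i+1}, c_ic_{i+1}, d_id_{i+1}, a_{i+1}b_i, a_ib_i, b_ic_i, c_id_i : 1\le i\le n\}$, indices taken modulo $n$. $d$ is the graph distance. A vertex $w$ strongly resolves distinct vertices $u,v$ if $d(v,w)=d(v,u)+d(u,w)$ or $d(u,w)=d(u,v)+d(v,w)$. A set $S$ is a strong resolving set if every two distinct vertices are strongly resolved by some vertex of $S$. *)

theory Defs
  imports Main
begin

(* Vertex (A,i) stands for a_{i+1}, etc.; indices are taken in {0..<n}, i.e. modulo n. *)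
datatype letter = A | B | C | D

type_synonym vertex = "letter \<times> nat"

definition Sverts :: "nat \<Rightarrow> vertex set" where
  "Sverts n = UNIV \<times> {..<n}"

definition Sedges :: "nat \<Rightarrow> vertex set set" where
  "Sedges n = (\<Union>i\<in>{..<n}.
     { {(A,i),(A,Suc i mod n)}, {(B,i),(B,Suc i mod n)},
       {(C,i),(C,Suc i mod n)}, {(D,i),(D,Suc i mod n)},
       {(A,Suc i mod n),(B,i)}, {(A,i),(B,i)}, {(B,i),(C,i)}, {(C,i),(D,i)} })"

definition Sadj :: "nat \<Rightarrow> vertex \<Rightarrow> vertex \<Rightarrow> bool" where
  "Sadj n u v \<longleftrightarrow> u \<noteq> v \<and> {u,v} \<in> Sedges n"

definition Sdist :: "nat \<Rightarrow> vertex \<Rightarrow> vertex \<Rightarrow> nat" where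
  "Sdist n u v = (LEAST k. (Sadj n ^^ k) u v)"

definition strongly_resolves :: "nat \<Rightarrow> vertex \<Rightarrow> vertex \<Rightarrow> vertex \<Rightarrow> bool" where
  "strongly_resolves n w u v \<longleftrightarrow>
     Sdist n v w = Sdist n v u + Sdist n u w \<or> Sdist n u w = Sdist n u v + Sdist n v w"

definition strong_resolving_set :: "nat \<Rightarrow> vertex set \<Rightarrow> bool" where
  "strong_resolving_set n S \<longleftrightarrow> S \<subseteq> Sverts n \<and>
     (\<forall>u\<in>Sverts n. \<forall>v\<in>Sverts n. u \<noteq> v \<longrightarrow> (\<exists>w\<in>S. strongly_resolves n w u v))"

end

theory Submission
  imports Defs
begin

text \<open>For every \<open>i\<close> the vertices \<open>d\<^sub>i\<close> and \<open>a\<^sub>i\<^sub>+\<^sub>k\<^sub>+\<^sub>1\<close> are at distance \<open>k + 3\<close>, which is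
  the diameter of \<open>S\<^sub>n\<close>: the cycle part contributes at most \<open>k\<close> steps and the
  column \<open>a, b, c, d\<close> at most \<open>3\<close>. A vertex strongly resolving a pair at diametral
  distance must be one of its two ends, since otherwise it would lie at distance more
  than the diameter from one of them. Hence a strong resolving set meets each of the \<open>n\<close>
  pairwise disjoint pairs \<open>{d\<^sub>i, a\<^sub>i\<^sub>+\<^sub>k\<^sub>+\<^sub>1}\<close>.\<close>

lemma relpowp_symp: "symp R \<Longrightarrow> (R ^^ m) x y \<Longrightarrow> (R ^^ m) y x"
proof (induction m arbitrary: y)
  case 0
  then show ?case by simp
next
  case (Suc m)
  then obtain z where "(R ^^ m) x z" "R z y" by (blast elim: relpowp_Suc_E)
  with Suc show ?case by (metis relpowp_Suc_I2 sympD)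
qed

lemma relpowp_lipschitz_bound:
  assumes "\<And>x y. R x y \<Longrightarrow> f y \<le> f x + 1" and "(R ^^ m) x y"
  shows "f y \<le> f x + m"
  using assms(2)
proof (induction m arbitrary: y)
  case 0
  then show ?case by simp
next
  case (Suc m)
  then obtain z where "(R ^^ m) x z" "R z y" by (blast elim: relpowp_Suc_E)
  with Suc.IH assms(1)[of z y] show ?case by fastforce
qed

lemma card_ge_transversal:
  assumes "finite S" and "\<And>i. i \<in> I \<Longrightarrow> S \<inter> P i \<noteq> {}"
    and "\<And>i j. i \<in> I \<Longrightarrow> j \<in> I \<Longrightarrow> i \<noteq> j \<Longrightarrow> P i \<inter> P j = {}"
  shows "card I \<le> card S"
proof -
  define g where "g i = (SOME x. x \<in> S \<inter> P i)" for i
  have g: "g i \<in> S \<inter> P i" if "i \<in> I" for i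
    using assms(2)[OF that] unfolding g_def by (metis all_not_in_conv someI_ex)
  have "inj_on g I"
    using g assms(3) by (fastforce intro: inj_onI)
  moreover have "g ` I \<subseteq> S"
    using g by blast
  ultimately show ?thesis
    using assms(1) by (rule card_inj_on_le)
qed

lemma symp_Sadj: "symp (Sadj n)"
  unfolding Sadj_def symp_def by (auto simp: insert_commute)

lemma Sadj_cycle: "n \<ge> 2 \<Longrightarrow> i < n \<Longrightarrow> Sadj n (L, i) (L, Suc i mod n)"
  unfolding Sadj_def Sedges_def
  by (cases L) (auto simp: mod_Suc intro!: bexI[of _ i])

lemma Sadj_A_B: "i < n \<Longrightarrow> Sadj n (A, i) (B, i)"
  and Sadj_B_C: "i < n \<Longrightarrow> Sadj n (B, i) (C, i)"
  and Sadj_C_D: "i < n \<Longrightarrow> Sadj n (C, i) (D, i)"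
  unfolding Sadj_def Sedges_def by (auto intro!: bexI[of _ i])

lemma Sadj_cases:
  assumes "Sadj n x y"
  obtains j where "j < n" "{x, y} \<in> { {(A,j),(A,Suc j mod n)}, {(B,j),(B,Suc j mod n)},
       {(C,j),(C,Suc j mod n)}, {(D,j),(D,Suc j mod n)},
       {(A,Suc j mod n),(B,j)}, {(A,j),(B,j)}, {(B,j),(C,j)}, {(C,j),(D,j)} }"
proof -
  from assms have "{x, y} \<in> Sedges n" unfolding Sadj_def by (rule conjunct2)
  then show ?thesis unfolding Sedges_def by (rule UN_E) (rule that, simp_all only: lessThan_iff)
qed

lemma UNIV_letter: "(UNIV :: letter set) = {A, B, C, D}"
  using letter.exhaust by auto

definition reach_within :: "nat \<Rightarrow> nat \<Rightarrow> vertex \<Rightarrow> vertex \<Rightarrow> bool" where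
  "reach_within n m x y \<longleftrightarrow> (\<exists>l\<le>m. (Sadj n ^^ l) x y)"

lemma reach_within_refl: "reach_within n 0 x x"
  unfolding reach_within_def by auto

lemma reach_within_edge: "Sadj n x y \<Longrightarrow> reach_within n 1 x y"
  unfolding reach_within_def by (intro exI[of _ 1]) auto

lemma reach_within_sym: "reach_within n m x y \<Longrightarrow> reach_within n m y x"
  unfolding reach_within_def using relpowp_symp[OF symp_Sadj] by blast

lemma reach_within_trans:
  "reach_within n a x y \<Longrightarrow> reach_within n b y z \<Longrightarrow> reach_within n (a + b) x z"
  unfolding reach_within_def by (meson add_mono relpowp_trans)

lemma reach_within_mono: "reach_within n a x y \<Longrightarrow> a \<le> b \<Longrightarrow> reach_within n b x y"
  unfolding reach_within_def using le_trans by blast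

lemma Sdist_le: "reach_within n m x y \<Longrightarrow> Sdist n x y \<le> m"
  unfolding reach_within_def Sdist_def by (meson Least_le le_trans)

lemma Sdist_walk: "reach_within n m x y \<Longrightarrow> (Sadj n ^^ Sdist n x y) x y"
  unfolding reach_within_def Sdist_def by (meson LeastI)

lemma Sdist_eq_0_imp_eq: "reach_within n m x y \<Longrightarrow> Sdist n x y = 0 \<Longrightarrow> x = y"
  using Sdist_walk by fastforce

lemma Sdist_commute: "Sdist n x y = Sdist n y x"
  unfolding Sdist_def using relpowp_symp[OF symp_Sadj] by metis

lemma reach_within_cycle:
  assumes "n \<ge> 2" "b < n"
  shows "reach_within n t (L, b) (L, (b + t) mod n)"
proof (induction t)
  case 0
  then show ?case using assms by (simp add: reach_within_refl)
next
  case (Suc t)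
  have "reach_within n 1 (L, (b + t) mod n) (L, Suc ((b + t) mod n) mod n)"
    using assms by (intro reach_within_edge Sadj_cycle) auto
  with Suc.IH show ?case
    using reach_within_trans by (fastforce simp: mod_Suc_eq)
qed

definition cyc_dist :: "nat \<Rightarrow> nat \<Rightarrow> nat \<Rightarrow> nat" where
  "cyc_dist n a b = (let d = (if a \<le> b then b - a else a - b) in min d (n - d))"

lemma cyc_dist_commute: "cyc_dist n a b = cyc_dist n b a"
  by (simp add: cyc_dist_def Let_def)

lemma cyc_dist_Suc_right_le:
  assumes "a < n" "b < n"
  shows "cyc_dist n a (Suc b mod n) \<le> cyc_dist n a b + 1"
proof (cases "Suc b = n")
  case True
  with assms show ?thesis by (auto simp: cyc_dist_def Let_def min_def)
next
  case False
  with assms show ?thesis by (auto simp: mod_Suc cyc_dist_def Let_def min_def)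
qed

lemma cyc_dist_le_Suc_right:
  assumes "a < n" "b < n"
  shows "cyc_dist n a b \<le> cyc_dist n a (Suc b mod n) + 1"
proof (cases "Suc b = n")
  case True
  with assms show ?thesis by (auto simp: cyc_dist_def Let_def min_def)
next
  case False
  with assms show ?thesis by (auto simp: mod_Suc cyc_dist_def Let_def min_def)
qed

lemma cyc_dist_Suc_Suc: "a < n \<Longrightarrow> b < n \<Longrightarrow> cyc_dist n (Suc a mod n) (Suc b mod n) = cyc_dist n a b"
  by (auto simp: mod_Suc cyc_dist_def Let_def min_def split: if_splits)

lemma cyc_dist_le_half: "n = 2 * k + 1 \<Longrightarrow> cyc_dist n a b \<le> k"
  by (auto simp: cyc_dist_def Let_def)

lemma reach_within_cyc_dist:
  assumes "n \<ge> 2" "a < n" "b < n"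
  shows "reach_within n (cyc_dist n a b) (L, a) (L, b)"
proof -
  have ordered: "reach_within n (cyc_dist n a b) (L, a) (L, b)"
    if "a \<le> b" "a < n" "b < n" for a b
  proof -
    have "(a + (b - a)) mod n = b" "(b + (n - (b - a))) mod n = a"
      using that by (simp_all add: mod_if)
    then have "reach_within n (b - a) (L, a) (L, b)" "reach_within n (n - (b - a)) (L, a) (L, b)"
      using reach_within_cycle[OF assms(1), of a "b - a" L] reach_within_cycle[OF assms(1), of b "n - (b - a)" L]
        that reach_within_sym by auto
    then show ?thesis by (simp add: cyc_dist_def Let_def min_def that)
  qed
  show ?thesis
  proof (cases "a \<le> b")
    case True
    with ordered assms show ?thesis by blast
  next
    case False
    with ordered[of b a] assms show ?thesis
      by (simp add: cyc_dist_commute reach_within_sym)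
  qed
qed

lemma reach_within_column:
  assumes "b < n"
  shows "reach_within n 3 (L1, b) (L2, b)"
proof -
  note AB = reach_within_edge[OF Sadj_A_B[OF assms]]
    and BC = reach_within_edge[OF Sadj_B_C[OF assms]]
    and CD = reach_within_edge[OF Sadj_C_D[OF assms]]
  have AC: "reach_within n 2 (A, b) (C, b)" and BD: "reach_within n 2 (B, b) (D, b)"
    using reach_within_trans[OF AB BC] reach_within_trans[OF BC CD] by (simp_all add: numeral_2_eq_2)
  have AD: "reach_within n 3 (A, b) (D, b)"
    using reach_within_trans[OF AC CD] by (simp add: numeral_3_eq_3)
  have down: "reach_within n 3 (A, b) (B, b)" "reach_within n 3 (A, b) (C, b)"
    "reach_within n 3 (B, b) (C, b)" "reach_within n 3 (B, b) (D, b)" "reach_within n 3 (C, b) (D, b)"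
    and stay: "reach_within n 3 (L, b) (L, b)" for L
    using AB AC BC BD CD reach_within_mono[OF reach_within_refl] by (auto elim: reach_within_mono)
  show ?thesis
    by (cases L1; cases L2) (simp_all add: AD stay down reach_within_sym)
qed

lemma reach_within_diameter:
  assumes "n = 2 * k + 1" "k \<ge> 1" "x \<in> Sverts n" "y \<in> Sverts n"
  shows "reach_within n (k + 3) x y"
proof -
  obtain L1 a L2 b where xy: "x = (L1, a)" "y = (L2, b)" "a < n" "b < n"
    using assms(3,4) by (auto simp: Sverts_def)
  have "reach_within n k (L1, a) (L1, b)"
    using reach_within_cyc_dist[of n a b L1] cyc_dist_le_half[OF assms(1)] assms(1,2) xy
    by (auto elim: reach_within_mono)
  with reach_within_column[OF \<open>b < n\<close>] show ?thesis
    unfolding xy using reach_within_trans by blast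
qed

fun level :: "letter \<Rightarrow> nat" where
  "level A = 3" | "level B = 2" | "level C = 1" | "level D = 0"

text \<open>A lower bound for the distance from \<open>d\<^sub>i\<close>: it vanishes at \<open>d\<^sub>i\<close> and grows by at most one
  along every edge. Since \<open>a\<^sub>j\<close> lies above both \<open>b\<^sub>j\<close> and \<open>b\<^sub>j\<^sub>-\<^sub>1\<close>, its cycle part is the
  smaller of its distances to \<open>i\<close> and \<open>i + 1\<close>.\<close>

fun potential :: "nat \<Rightarrow> nat \<Rightarrow> vertex \<Rightarrow> nat" where
  "potential n i (L, j) = level L +
     (if L = A then min (cyc_dist n i j) (cyc_dist n (Suc i mod n) j) else cyc_dist n i j)"

lemma potential_Sadj_le:
  assumes "Sadj n x y" "i < n"
  shows "potential n i y \<le> potential n i x + 1"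
proof -
  obtain j where j: "j < n" and edge: "{x, y} \<in> { {(A,j),(A,Suc j mod n)}, {(B,j),(B,Suc j mod n)},
       {(C,j),(C,Suc j mod n)}, {(D,j),(D,Suc j mod n)},
       {(A,Suc j mod n),(B,j)}, {(A,j),(B,j)}, {(B,j),(C,j)}, {(C,j),(D,j)} }"
    using assms(1) by (rule Sadj_cases)
  have i': "Suc i mod n < n" using assms(2) by simp
  note steps = cyc_dist_Suc_right_le[OF assms(2) j] cyc_dist_le_Suc_right[OF assms(2) j]
    cyc_dist_Suc_right_le[OF i' j] cyc_dist_le_Suc_right[OF i' j]
    cyc_dist_Suc_Suc[OF assms(2) j]
    cyc_dist_Suc_right_le[OF j assms(2)] cyc_dist_le_Suc_right[OF j assms(2)]
  note commute = cyc_dist_commute[of n j i] cyc_dist_commute[of n j "Suc i mod n"]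
  from edge show ?thesis
    unfolding insert_iff empty_iff doubleton_eq_iff
    using steps unfolding commute by (elim disjE conjE; simp add: min_def)
qed

lemma Sdist_antipodal:
  assumes "n = 2 * k + 1" "k \<ge> 1" "i < n"
  shows "Sdist n (D, i) (A, (i + k + 1) mod n) = k + 3"
proof -
  let ?v = "(A, (i + k + 1) mod n)"
  have reach: "reach_within n (k + 3) (D, i) ?v"
    using assms by (intro reach_within_diameter) (auto simp: Sverts_def)
  have "potential n i ?v = k + 3"
    using assms by (auto simp: mod_if mod_Suc cyc_dist_def Let_def min_def)
  moreover have "potential n i (D, i) = 0"
    by (simp add: cyc_dist_def)
  ultimately have "k + 3 \<le> Sdist n (D, i) ?v"
    using relpowp_lipschitz_bound[where f = "potential n i", OF potential_Sadj_le[OF _ assms(3)]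
        Sdist_walk[OF reach]] by simp
  with Sdist_le[OF reach] show ?thesis by simp
qed

lemma strongly_resolves_diametral_pair:
  assumes diam: "\<And>x y. x \<in> Sverts n \<Longrightarrow> y \<in> Sverts n \<Longrightarrow> reach_within n m x y"
    and "u \<in> Sverts n" "v \<in> Sverts n" "w \<in> Sverts n"
    and "Sdist n u v = m" "strongly_resolves n w u v"
  shows "w = u \<or> w = v"
proof -
  have "Sdist n u w \<le> m" "Sdist n v w \<le> m" "Sdist n v u = m"
    using assms Sdist_le Sdist_commute by metis+
  with \<open>strongly_resolves n w u v\<close> have "Sdist n u w = 0 \<or> Sdist n v w = 0"
    unfolding strongly_resolves_def \<open>Sdist n u v = m\<close> by linarith
  then show ?thesis
    using Sdist_eq_0_imp_eq diam assms(2-4) by metis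
qed

lemma antipodal_pairs_disjoint:
  fixes n k i j :: nat
  assumes "n = 2 * k + 1" "i < n" "j < n" "i \<noteq> j"
  shows "{(D, i), (A, (i + k + 1) mod n)} \<inter> {(D, j), (A, (j + k + 1) mod n)} = {}"
  using assms by (auto simp: mod_if split: if_splits)

theorem lemma3p9:
  fixes n k :: nat and S :: "vertex set"
  assumes "k \<ge> 1" and "n = 2 * k + 1"
    and "strong_resolving_set n S"
  shows "card S \<ge> n"
proof -
  have S: "S \<subseteq> Sverts n"
    using assms(3) unfolding strong_resolving_set_def by blast
  then have "finite S"
    by (rule finite_subset) (simp add: Sverts_def UNIV_letter)
  moreover have "S \<inter> {(D, i), (A, (i + k + 1) mod n)} \<noteq> {}" if i: "i \<in> {..<n}" for i
  proof -
    have ends: "(D, i) \<in> Sverts n" "(A, (i + k + 1) mod n) \<in> Sverts n"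
      using i by (auto simp: Sverts_def)
    then obtain w where "w \<in> S" "strongly_resolves n w (D, i) (A, (i + k + 1) mod n)"
      using assms(3) unfolding strong_resolving_set_def by blast
    with strongly_resolves_diametral_pair[OF reach_within_diameter[OF assms(2,1)] ends]
      Sdist_antipodal[OF assms(2,1)] i S show ?thesis by blast
  qed
  ultimately have "card {..<n} \<le> card S"
    using antipodal_pairs_disjoint[OF assms(2)] by (rule card_ge_transversal) auto
  then show ?thesis by simp
qed

end
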